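(* For finite $W\subset\mathbb{Z}^2$ let $D(W)$ denote the set of integer points in the Euclidean convex hull of $W$. Let $D_1=D(\{(-3,0),(0,3),(1,2),(-2,-1)\})$, $D_2=D(\{(1,2),(3,0),(2,-1),(0,1)\})$, $D_3=D(\{(2,-1),(0,-3),(-1,-2),(1,0)\})$, $D_4=D(\{(-1,-2),(-2,-1),(-1,0),(0,-1)\})$, $D_5=D(\{(5,0),(7,2),(8,1),(6,-1)\})$, $D_6=D(\{(7,2),(8,3),(9,2),(9,0)\})$, $D_7=D(\{(9,0),(9,-2),(8,-3),(7,-2)\})$, $D_8=D(\{(7,-2),(6,-1),(7,0),(8,-1)\})$, and let $X=\{(4,0)\}\cup\bigcup_{i=1}^8 D_i$. Then $$B'=\{(-3,0),(0,-3),(0,3),(8,-3),(8,3),(9,-2),(9,-1),(9,1),(9,2)\}$$ is a minimal freezing set for $(X,c_2)$.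
   Context: For $x\neq y$ in $\mathbb{Z}^2$, $x,y$ are $c_2$-adjacent if each coordinate differs by at most 1. $f:X\to X$ is $c_2$-continuous ($f\in C(X,c_2)$) if whenever $x,x'$ are $c_2$-adjacent, $f(x)$ and $f(x')$ are equal or $c_2$-adjacent. $\mathrm{Fix}(f)=\{x:f(x)=x\}$. $A\subset X$ is a freezing set for $(X,c_2)$ if every $f\in C(X,c_2)$ with $A\subset\mathrm{Fix}(f)$ is the identity on $X$; it is minimal if no proper subset of $A$ is a freezing set. *)

theory Defs
  imports "HOL-Analysis.Analysis"
begin

type_synonym pt = "int \<times> int"

definition c2_adj :: "pt \<Rightarrow> pt \<Rightarrow> bool" where
  "c2_adj x y \<longleftrightarrow> x \<noteq> y \<and> \<bar>fst x - fst y\<bar> \<le> 1 \<and> \<bar>snd x - snd y\<bar> \<le> 1"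

text \<open>Continuous self-maps of X (functions are total in HOL; only the values on X matter).\<close>
definition c2_continuous :: "pt set \<Rightarrow> (pt \<Rightarrow> pt) \<Rightarrow> bool" where
  "c2_continuous X f \<longleftrightarrow> f ` X \<subseteq> X \<and>
     (\<forall>x\<in>X. \<forall>y\<in>X. c2_adj x y \<longrightarrow> (f x = f y \<or> c2_adj (f x) (f y)))"

definition freezing_set :: "pt set \<Rightarrow> pt set \<Rightarrow> bool" where
  "freezing_set X A \<longleftrightarrow> A \<subseteq> X \<and>
     (\<forall>f. c2_continuous X f \<and> (\<forall>a\<in>A. f a = a) \<longrightarrow> (\<forall>x\<in>X. f x = x))"

definition minimal_freezing_set :: "pt set \<Rightarrow> pt set \<Rightarrow> bool" where
  "minimal_freezing_set X A \<longleftrightarrow> freezing_set X A \<and> (\<forall>B. B \<subset> A \<longrightarrow> \<not> freezing_set X B)"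

definition to_real :: "pt \<Rightarrow> real \<times> real" where
  "to_real p = (real_of_int (fst p), real_of_int (snd p))"

definition D :: "pt set \<Rightarrow> pt set" where
  "D W = {p. to_real p \<in> convex hull (to_real ` W)}"

definition Xex :: "pt set" where
  "Xex = {(4,0)}
     \<union> D {(-3,0),(0,3),(1,2),(-2,-1)}
     \<union> D {(1,2),(3,0),(2,-1),(0,1)}
     \<union> D {(2,-1),(0,-3),(-1,-2),(1,0)}
     \<union> D {(-1,-2),(-2,-1),(-1,0),(0,-1)}
     \<union> D {(5,0),(7,2),(8,1),(6,-1)}
     \<union> D {(7,2),(8,3),(9,2),(9,0)}
     \<union> D {(9,0),(9,-2),(8,-3),(7,-2)}
     \<union> D {(7,-2),(6,-1),(7,0),(8,-1)}"

end

theory Submission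
  imports Defs
begin

text \<open>
  A c2-continuous map sends adjacent points to points at Chebyshev distance at most 1. Hence if
  f fixes a and X contains a c2-path from x to a of length \<open>\<parallel>x - a\<parallel>\<^sub>\<infinity>\<close>,
  then \<open>\<parallel>f x - a\<parallel>\<^sub>\<infinity> \<le> \<parallel>x - a\<parallel>\<^sub>\<infinity>\<close>. Seven points of B' are joined in this
  way to every point of X, and for each x \<in> X these bounds, together with continuity at the two
  remaining points of B', leave x as the only possible value of f x. For minimality, each
  b \<in> B' has a neighbour c adjacent to all other neighbours of b; moving b to c and fixing
  everything else is continuous, so b lies in every freezing subset of B'.
\<close>

text \<open>\<open>orient a b p > 0\<close> iff p lies to the left of the directed line from a to b. The
  quadrilaterals defining Xex are listed clockwise, so their interiors lie to the right of every edge.\<close>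

definition orient :: "pt \<Rightarrow> pt \<Rightarrow> pt \<Rightarrow> int" where
  "orient a b p = (fst b - fst a) * (snd p - snd a) - (snd b - snd a) * (fst p - fst a)"

definition in_cw_quad :: "pt \<Rightarrow> pt \<Rightarrow> pt \<Rightarrow> pt \<Rightarrow> pt \<Rightarrow> bool" where
  "in_cw_quad a b c d p \<longleftrightarrow>
     orient a b p \<le> 0 \<and> orient b c p \<le> 0 \<and> orient c d p \<le> 0 \<and> orient d a p \<le> 0"

lemma D_halfplane:
  assumes "\<forall>w\<in>W. l1 * fst w + l2 * snd w \<le> c" and "p \<in> D W"
  shows "l1 * fst p + l2 * snd p \<le> c"
proof -
  let ?H = "{z :: real \<times> real. of_int l1 * fst z + of_int l2 * snd z \<le> of_int c}"
  have "convex ?H"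
    using convex_halfspace_le[of "(of_int l1 :: real, of_int l2 :: real)" "of_int c"]
    by (simp add: inner_prod_def inner_real_def)
  moreover have "to_real ` W \<subseteq> ?H"
    using assms(1) by (force simp: to_real_def simp flip: of_int_mult of_int_add of_int_le_iff)
  ultimately have "convex hull (to_real ` W) \<subseteq> ?H" by (rule hull_minimal[rotated])
  with assms(2) have "to_real p \<in> ?H" by (auto simp: D_def)
  then show ?thesis by (simp add: to_real_def flip: of_int_mult of_int_add of_int_le_iff)
qed

lemma D_orient_le:
  assumes "\<forall>w\<in>W. orient a b w \<le> 0" and "p \<in> D W"
  shows "orient a b p \<le> 0"
  using D_halfplane[of W "snd a - snd b" "fst b - fst a"
      "(fst b - fst a) * snd a - (snd b - snd a) * fst a" p] assms
  by (simp add: orient_def algebra_simps)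

lemma mem_D_if_in_cw_triangle:
  assumes "{a, b, c} \<subseteq> W" "orient a b c < 0"
    and "orient a b p \<le> 0" "orient b c p \<le> 0" "orient c a p \<le> 0"
  shows "p \<in> D W"
proof -
  define \<Delta> where "\<Delta> = real_of_int (orient a b c)"
  define u v w
    where "u = orient b c p / \<Delta>" and "v = orient c a p / \<Delta>" and "w = orient a b p / \<Delta>"
  have "\<Delta> < 0" using assms(2) by (simp add: \<Delta>_def)
  have sum: "orient b c p + orient c a p + orient a b p = orient a b c"
    by (simp add: orient_def algebra_simps)
  have bary: "orient b c p * fst a + orient c a p * fst b + orient a b p * fst c = orient a b c * fst p"
             "orient b c p * snd a + orient c a p * snd b + orient a b p * snd c = orient a b c * snd p"
    by (simp_all add: orient_def algebra_simps)
  have "u \<ge> 0" "v \<ge> 0" "w \<ge> 0"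
    using assms(3-5) \<open>\<Delta> < 0\<close> by (simp_all add: u_def v_def w_def divide_nonpos_neg)
  moreover have "u + v + w = 1"
    using arg_cong[OF sum, of real_of_int] \<open>\<Delta> < 0\<close> by (simp add: u_def v_def w_def \<Delta>_def field_simps)
  moreover have "to_real p = u *\<^sub>R to_real a + v *\<^sub>R to_real b + w *\<^sub>R to_real c"
    using arg_cong[OF bary(1), of real_of_int] arg_cong[OF bary(2), of real_of_int] \<open>\<Delta> < 0\<close>
    by (simp add: to_real_def u_def v_def w_def \<Delta>_def field_simps)
  ultimately have "to_real p \<in> convex hull {to_real a, to_real b, to_real c}"
    by (auto simp: convex_hull_3)
  also have "\<dots> \<subseteq> convex hull (to_real ` W)"
    using assms(1) by (intro hull_mono) auto
  finally show ?thesis by (simp add: D_def)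
qed

lemma D_cw_quad:
  assumes "orient a b c < 0" "orient a c d < 0" "\<forall>w\<in>{a, b, c, d}. in_cw_quad a b c d w"
  shows "D {a, b, c, d} = {p. in_cw_quad a b c d p}"
proof (intro equalityI subsetI CollectI)
  fix p assume "p \<in> D {a, b, c, d}"
  with assms(3) show "in_cw_quad a b c d p"
    unfolding in_cw_quad_def by (meson D_orient_le)
next
  fix p assume "p \<in> {p. in_cw_quad a b c d p}"
  then have q: "orient a b p \<le> 0" "orient b c p \<le> 0" "orient c d p \<le> 0" "orient d a p \<le> 0"
    by (simp_all add: in_cw_quad_def)
  show "p \<in> D {a, b, c, d}"
  proof (cases "orient a c p \<le> 0")
    case True
    then show ?thesis using assms(2) q(3,4) by (intro mem_D_if_in_cw_triangle[of a c d]) auto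
  next
    case False
    have "orient c a p = - orient a c p" by (simp add: orient_def algebra_simps)
    with False have "orient c a p \<le> 0" by simp
    then show ?thesis using assms(1) q(1,2) by (intro mem_D_if_in_cw_triangle[of a b c]) auto
  qed
qed

definition X_explicit :: "pt set" where
  "X_explicit = {(-3,0),(-2,-1),(-2,0),(-2,1),(-1,-2),(-1,-1),(-1,0),(-1,1),(-1,2),
     (0,-3),(0,-2),(0,-1),(0,1),(0,2),(0,3),(1,-2),(1,-1),(1,0),(1,1),(1,2),(2,-1),(2,0),(2,1),
     (3,0),(4,0),(5,0),(6,-1),(6,0),(6,1),(7,-2),(7,-1),(7,0),(7,1),(7,2),
     (8,-3),(8,-2),(8,-1),(8,1),(8,2),(8,3),(9,-2),(9,-1),(9,0),(9,1),(9,2)}"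

lemma Xex_eq: "Xex = X_explicit"
proof -
  define in_X where "in_X p \<longleftrightarrow> p = (4,0)
     \<or> in_cw_quad (-3,0) (0,3) (1,2) (-2,-1) p \<or> in_cw_quad (1,2) (3,0) (2,-1) (0,1) p
     \<or> in_cw_quad (2,-1) (0,-3) (-1,-2) (1,0) p \<or> in_cw_quad (-1,-2) (-2,-1) (-1,0) (0,-1) p
     \<or> in_cw_quad (5,0) (7,2) (8,1) (6,-1) p \<or> in_cw_quad (7,2) (8,3) (9,2) (9,0) p
     \<or> in_cw_quad (9,0) (9,-2) (8,-3) (7,-2) p \<or> in_cw_quad (7,-2) (6,-1) (7,0) (8,-1) p" for p
  have "Xex = {p. in_X p}"
    unfolding Xex_def in_X_def
    by (simp add: D_cw_quad in_cw_quad_def orient_def Collect_disj_eq Un_assoc)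
  moreover have "{p. in_X p} \<subseteq> {-3..9} \<times> {-3..3}"
    by (auto simp: in_X_def in_cw_quad_def orient_def)
  moreover have "\<forall>p\<in>{-3..9} \<times> {-3..3}. in_X p \<longleftrightarrow> p \<in> X_explicit"
    unfolding in_X_def by code_simp
  moreover have "X_explicit \<subseteq> {-3..9} \<times> {-3..3}"
    by (simp add: X_explicit_def)
  ultimately show ?thesis by blast
qed

definition chebyshev_dist :: "pt \<Rightarrow> pt \<Rightarrow> int" where
  "chebyshev_dist p q = max \<bar>fst p - fst q\<bar> \<bar>snd p - snd q\<bar>"

lemma chebyshev_dist_triangle: "chebyshev_dist p r \<le> chebyshev_dist p q + chebyshev_dist q r"
proof -
  have "\<bar>fst p - fst r\<bar> \<le> \<bar>fst p - fst q\<bar> + \<bar>fst q - fst r\<bar>"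
       "\<bar>snd p - snd r\<bar> \<le> \<bar>snd p - snd q\<bar> + \<bar>snd q - snd r\<bar>"
    by arith+
  then show ?thesis
    unfolding chebyshev_dist_def by (simp add: max_def)
qed

lemma chebyshev_dist_le_1_iff: "chebyshev_dist p q \<le> 1 \<longleftrightarrow> p = q \<or> c2_adj p q"
  unfolding chebyshev_dist_def c2_adj_def by (auto simp: prod_eq_iff)

lemma c2_continuous_chebyshev_dist_le:
  assumes "c2_continuous X f" "p \<in> X" "q \<in> X" "chebyshev_dist p q \<le> 1"
  shows "chebyshev_dist (f p) (f q) \<le> chebyshev_dist p q"
proof (cases "p = q")
  case False
  then have adj: "c2_adj p q" and dist: "chebyshev_dist p q = 1"
    using assms(4) by (auto simp: chebyshev_dist_def c2_adj_def prod_eq_iff)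
  from adj assms(1-3) have "f p = f q \<or> c2_adj (f p) (f q)"
    by (simp add: c2_continuous_def)
  then show ?thesis
    unfolding dist chebyshev_dist_le_1_iff .
qed (simp add: chebyshev_dist_def)

text \<open>Equivalently: every x \<in> X is joined to a by a c2-path in X whose length is the
  Chebyshev distance from x to a.\<close>

definition chebyshev_geodesic_centre :: "pt set \<Rightarrow> pt \<Rightarrow> bool" where
  "chebyshev_geodesic_centre X a \<longleftrightarrow> a \<in> X \<and>
     (\<forall>x\<in>X. x \<noteq> a \<longrightarrow> (\<exists>y\<in>X. c2_adj x y \<and> chebyshev_dist y a < chebyshev_dist x a))"

lemma chebyshev_dist_to_fixed_centre_le:
  assumes f: "c2_continuous X f" and a: "chebyshev_geodesic_centre X a" "f a = a" and "x \<in> X"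
  shows "chebyshev_dist (f x) a \<le> chebyshev_dist x a"
  using \<open>x \<in> X\<close>
proof (induction "nat (chebyshev_dist x a)" arbitrary: x rule: less_induct)
  case less
  show ?case
  proof (cases "x = a")
    case False
    with a(1) less.prems obtain y
      where y: "y \<in> X" "c2_adj x y" "chebyshev_dist y a < chebyshev_dist x a"
      by (auto simp: chebyshev_geodesic_centre_def)
    have "0 \<le> chebyshev_dist y a" by (simp add: chebyshev_dist_def)
    with y(3) have "chebyshev_dist (f y) a \<le> chebyshev_dist y a"
      by (intro less.hyps y(1)) simp
    moreover have "chebyshev_dist x y \<le> 1"
      using y(2) by (simp add: chebyshev_dist_le_1_iff)
    then have "chebyshev_dist (f x) (f y) \<le> 1"
      using c2_continuous_chebyshev_dist_le[OF f less.prems y(1)] by linarith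
    ultimately show ?thesis
      using chebyshev_dist_triangle[of "f x" a "f y"] y(3) by linarith
  qed (simp add: a(2))
qed

lemma freezing_set_if_chebyshev_pinned:
  assumes "A \<subseteq> X" "G \<subseteq> A" "\<forall>a\<in>G. chebyshev_geodesic_centre X a"
    and pinned: "\<forall>x\<in>X. \<forall>y\<in>X. (\<forall>a\<in>A. (a \<in> G \<or> chebyshev_dist x a \<le> 1) \<longrightarrow>
       chebyshev_dist y a \<le> chebyshev_dist x a) \<longrightarrow> y = x"
  shows "freezing_set X A"
  unfolding freezing_set_def
proof (intro conjI allI impI ballI)
  fix f x assume f: "c2_continuous X f \<and> (\<forall>a\<in>A. f a = a)" and x: "x \<in> X"
  have "chebyshev_dist (f x) a \<le> chebyshev_dist x a"
    if "a \<in> A" "a \<in> G \<or> chebyshev_dist x a \<le> 1" for a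
    using that(2)
  proof
    assume "a \<in> G"
    with assms(3) f x that(1) show ?thesis
      by (auto intro: chebyshev_dist_to_fixed_centre_le)
  next
    assume "chebyshev_dist x a \<le> 1"
    with c2_continuous_chebyshev_dist_le[of X f x a] f x that(1) assms(1) show ?thesis
      by auto
  qed
  moreover have "f x \<in> X" using f x by (auto simp: c2_continuous_def)
  ultimately show "f x = x" using pinned x by blast
qed (use assms(1) in simp)

definition c2_dominated_by :: "pt set \<Rightarrow> pt \<Rightarrow> pt \<Rightarrow> bool" where
  "c2_dominated_by X b c \<longleftrightarrow> c \<in> X \<and> c \<noteq> b \<and> (\<forall>y\<in>X. c2_adj b y \<longrightarrow> y = c \<or> c2_adj c y)"

lemma c2_continuous_fun_upd_dominated:
  assumes "c2_dominated_by X b c"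
  shows "c2_continuous X (id(b := c))"
  using assms unfolding c2_dominated_by_def c2_continuous_def c2_adj_def
  by (auto simp: abs_minus_commute)

lemma dominated_mem_freezing_set:
  assumes "freezing_set X A" "b \<in> X" "c2_dominated_by X b c"
  shows "b \<in> A"
proof (rule ccontr)
  assume "b \<notin> A"
  with assms(1) c2_continuous_fun_upd_dominated[OF assms(3)] have "(id(b := c)) b = b"
    using assms(2) unfolding freezing_set_def by (metis fun_upd_other id_apply)
  with assms(3) show False by (simp add: c2_dominated_by_def)
qed

lemma minimal_freezing_set_if_dominated:
  assumes "freezing_set X A" and "\<forall>b\<in>A. \<exists>c. c2_dominated_by X b c"
  shows "minimal_freezing_set X A"
  unfolding minimal_freezing_set_def
proof (intro conjI allI impI notI)
  fix B assume "B \<subset> A" "freezing_set X B"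
  moreover have "A \<subseteq> X" using assms(1) by (simp add: freezing_set_def)
  ultimately have "A \<subseteq> B" using assms(2) dominated_mem_freezing_set by blast
  with \<open>B \<subset> A\<close> show False by blast
qed (fact assms(1))

lemma X_explicit_chebyshev_geodesic_centres:
  "\<forall>a\<in>{(-3,0),(0,-3),(0,3),(8,-3),(8,3),(9,-2),(9,2)}. chebyshev_geodesic_centre X_explicit a"
  unfolding chebyshev_geodesic_centre_def by code_simp

lemma X_explicit_chebyshev_pinned:
  "\<forall>x\<in>X_explicit. \<forall>y\<in>X_explicit.
     (\<forall>a\<in>{(-3,0),(0,-3),(0,3),(8,-3),(8,3),(9,-2),(9,-1),(9,1),(9,2)}.
        (a \<in> {(-3,0),(0,-3),(0,3),(8,-3),(8,3),(9,-2),(9,2)} \<or> chebyshev_dist x a \<le> 1) \<longrightarrow>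
        chebyshev_dist y a \<le> chebyshev_dist x a) \<longrightarrow> y = x"
  by code_simp

lemma X_explicit_dominated:
  "\<forall>b\<in>{(-3,0),(0,-3),(0,3),(8,-3),(8,3),(9,-2),(9,-1),(9,1),(9,2)}.
     \<exists>c\<in>{(-2,0),(0,-2),(0,2),(8,-2),(8,2),(8,-1),(8,1)}. c2_dominated_by X_explicit b c"
  unfolding c2_dominated_by_def by code_simp

theorem mainTheorem6:
  shows "minimal_freezing_set Xex
           {(-3,0),(0,-3),(0,3),(8,-3),(8,3),(9,-2),(9,-1),(9,1),(9,2)}"
  unfolding Xex_eq
proof (rule minimal_freezing_set_if_dominated)
  show "freezing_set X_explicit {(-3,0),(0,-3),(0,3),(8,-3),(8,3),(9,-2),(9,-1),(9,1),(9,2)}"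
    by (rule freezing_set_if_chebyshev_pinned[OF _ _ X_explicit_chebyshev_geodesic_centres
          X_explicit_chebyshev_pinned]) (auto simp: X_explicit_def)
  show "\<forall>b\<in>{(-3,0),(0,-3),(0,3),(8,-3),(8,3),(9,-2),(9,-1),(9,1),(9,2)}.
          \<exists>c. c2_dominated_by X_explicit b c"
    using X_explicit_dominated by blast
qed

end
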